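(* Every graph of pathwidth at most $2$ and order $n$ has at most $4^{n/3}$ induced matchings. The bound is attained by the triangle $K_3$.
   Context: An induced matching of a graph $G=(V,E)$ is here a set $D\subseteq V$ such that every vertex of $D$ has exactly one neighbour in $D$ (a $(\{1\},\mathbb{N})$-dominating set); the empty set counts. Equivalently, a set of edges $M$ such that the subgraph induced by the endpoints of $M$ has edge set $M$. Order = number of vertices; pathwidth is the standard notion. *)

theory Defs
  imports Complex_Main
begin

definition simple_graph :: "'a set \<Rightarrow> ('a \<Rightarrow> 'a \<Rightarrow> bool) \<Rightarrow> bool" where
  "simple_graph V E \<longleftrightarrow> finite V \<and> (\<forall>u v. E u v \<longrightarrow> u \<in> V \<and> v \<in> V)
     \<and> (\<forall>u v. E u v \<longrightarrow> E v u) \<and> (\<forall>v. \<not> E v v)"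

definition path_decomposition :: "'a set \<Rightarrow> ('a \<Rightarrow> 'a \<Rightarrow> bool) \<Rightarrow> 'a set list \<Rightarrow> bool" where
  "path_decomposition V E B \<longleftrightarrow>
     (\<forall>i<length B. B ! i \<subseteq> V)
   \<and> (\<forall>v\<in>V. \<exists>i<length B. v \<in> B ! i)
   \<and> (\<forall>u v. E u v \<longrightarrow> (\<exists>i<length B. u \<in> B ! i \<and> v \<in> B ! i))
   \<and> (\<forall>v i j k. i \<le> j \<and> j \<le> k \<and> k < length B \<and> v \<in> B ! i \<and> v \<in> B ! k \<longrightarrow> v \<in> B ! j)"

text \<open>Width of a decomposition = max bag size minus one; pathwidth = minimum width.
  So "pathwidth at most k" means some path decomposition has all bags of size at most k+1.\<close>
definition pathwidth_le :: "'a set \<Rightarrow> ('a \<Rightarrow> 'a \<Rightarrow> bool) \<Rightarrow> nat \<Rightarrow> bool" where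
  "pathwidth_le V E k \<longleftrightarrow>
     (\<exists>B. path_decomposition V E B \<and> (\<forall>X\<in>set B. card X \<le> k + 1))"

text \<open>Induced matchings as ({1},N)-dominating sets: every vertex of D has exactly one neighbour in D.\<close>
definition induced_matchings :: "'a set \<Rightarrow> ('a \<Rightarrow> 'a \<Rightarrow> bool) \<Rightarrow> 'a set set" where
  "induced_matchings V E = {D. D \<subseteq> V \<and> (\<forall>v\<in>D. card {u\<in>D. E v u} = 1)}"

end

theory Submission
  imports Defs
begin

text \<open>A graph of pathwidth at most 2 is 2-degenerate: in any vertex subset, the vertex whose last
  bag comes first has all its neighbours in that bag of size at most 3. An induced matching either
  avoids a vertex x or matches it to a neighbour u, and then contains no other neighbour of x or u;
  hence IM(G) \<le> IM(G - x) + sum over u of IM(G - N(x) - N(u)). Branching in this way at a vertex of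
  degree at most 2 (looking one step further when it lies in a triangle with another vertex of
  degree 2) deletes enough vertices in every branch for the bound c^n with c^3 = 4 to survive
  induction on n. An isolated triangle makes the recurrence tight, 4 c^(n-3) = c^n, and K3 itself
  attains it.\<close>

definition nbhd :: "'a set \<Rightarrow> ('a \<Rightarrow> 'a \<Rightarrow> bool) \<Rightarrow> 'a \<Rightarrow> 'a set" where
  "nbhd W E v = {u \<in> W. E v u}"

definition degenerate :: "'a set \<Rightarrow> ('a \<Rightarrow> 'a \<Rightarrow> bool) \<Rightarrow> nat \<Rightarrow> bool" where
  "degenerate V E k \<longleftrightarrow> (\<forall>W \<subseteq> V. W \<noteq> {} \<longrightarrow> (\<exists>v\<in>W. card (nbhd W E v) \<le> k))"

lemma nbhd_Diff_singleton: "nbhd (W - {y}) E x = nbhd W E x - {y}"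
  unfolding nbhd_def by auto

lemma degenerate_subset: "degenerate V E k \<Longrightarrow> W \<subseteq> V \<Longrightarrow> degenerate W E k"
  unfolding degenerate_def by (meson order.trans)

section \<open>Graphs of pathwidth at most k are k-degenerate\<close>

lemma path_decompositionD:
  assumes "path_decomposition V E B"
  shows path_decomposition_bag_subset: "i < length B \<Longrightarrow> B ! i \<subseteq> V"
    and path_decomposition_covers_vertex: "v \<in> V \<Longrightarrow> \<exists>i<length B. v \<in> B ! i"
    and path_decomposition_covers_edge: "E u v \<Longrightarrow> \<exists>i<length B. u \<in> B ! i \<and> v \<in> B ! i"
    and path_decomposition_interpolate:
      "i \<le> j \<Longrightarrow> j \<le> k \<Longrightarrow> k < length B \<Longrightarrow> v \<in> B ! i \<Longrightarrow> v \<in> B ! k \<Longrightarrow> v \<in> B ! j"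
  using assms unfolding path_decomposition_def by meson+

definition last_bag :: "'a set list \<Rightarrow> 'a \<Rightarrow> nat" where
  "last_bag B v = Max {i. i < length B \<and> v \<in> B ! i}"

lemma last_bag_spec:
  assumes "i < length B" "v \<in> B ! i"
  shows "i \<le> last_bag B v" "last_bag B v < length B" "v \<in> B ! last_bag B v"
proof -
  let ?I = "{i. i < length B \<and> v \<in> B ! i}"
  have fin: "finite ?I" by simp
  have i: "i \<in> ?I" using assms by simp
  have "Max ?I \<in> ?I" using fin i Max_in by (metis empty_iff)
  then show "last_bag B v < length B" "v \<in> B ! last_bag B v"
    unfolding last_bag_def by simp_all
  show "i \<le> last_bag B v" unfolding last_bag_def using fin i by (rule Max_ge)
qed

text \<open>A vertex of W whose last bag comes first sees all its W-neighbours in that bag: each of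
  them occurs in an earlier bag (shared edge) and in a later one (its own last bag).\<close>
lemma nbhd_subset_last_bag:
  assumes pd: "path_decomposition V E B" and "v \<in> W"
    and first: "\<forall>u\<in>W. last_bag B v \<le> last_bag B u"
  shows "nbhd W E v \<subseteq> B ! last_bag B v"
proof
  fix u assume "u \<in> nbhd W E v"
  then have "u \<in> W" "E v u" by (auto simp: nbhd_def)
  then obtain i where i: "i < length B" "v \<in> B ! i" "u \<in> B ! i"
    using path_decomposition_covers_edge[OF pd] by blast
  have "i \<le> last_bag B v" by (rule last_bag_spec(1)[OF i(1,2)])
  moreover have "last_bag B v \<le> last_bag B u" using first \<open>u \<in> W\<close> by blast
  ultimately show "u \<in> B ! last_bag B v"
    using path_decomposition_interpolate[OF pd] last_bag_spec(2,3)[OF i(1,3)] i(3) by blast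
qed

lemma pathwidth_le_imp_degenerate:
  assumes pw: "pathwidth_le V E k" and "finite V" and "irreflp E"
  shows "degenerate V E k"
  unfolding degenerate_def
proof (intro allI impI)
  fix W assume W: "W \<subseteq> V" "W \<noteq> {}"
  obtain B where pd: "path_decomposition V E B" and bags: "\<forall>X\<in>set B. card X \<le> k + 1"
    using pw unfolding pathwidth_le_def by blast
  obtain v where v: "v \<in> W" and first: "\<forall>u\<in>W. last_bag B v \<le> last_bag B u"
    using ex_has_least_nat[of "\<lambda>u. u \<in> W"] W(2) by blast
  then obtain i where "i < length B" "v \<in> B ! i"
    using path_decomposition_covers_vertex[OF pd] W(1) by blast
  then have m: "last_bag B v < length B" "v \<in> B ! last_bag B v" by (rule last_bag_spec)+
  let ?X = "B ! last_bag B v"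
  have "finite ?X"
    using path_decomposition_bag_subset[OF pd m(1)] \<open>finite V\<close> by (rule finite_subset)
  have "v \<notin> nbhd W E v" using \<open>irreflp E\<close> by (simp add: nbhd_def irreflp_def)
  then have "nbhd W E v \<subseteq> ?X - {v}" using nbhd_subset_last_bag[OF pd v first] by blast
  then have "card (nbhd W E v) \<le> card ?X - 1"
    using \<open>finite ?X\<close> m(2) by (metis card_Diff_singleton card_mono finite_Diff)
  also have "\<dots> \<le> k" using bags nth_mem[OF m(1)] by fastforce
  finally show "\<exists>v\<in>W. card (nbhd W E v) \<le> k" using v by blast
qed

section \<open>Counting induced matchings by branching\<close>

lemma finite_induced_matchings: "finite W \<Longrightarrow> finite (induced_matchings W E)"
  unfolding induced_matchings_def by (rule finite_subset[of _ "Pow W"]) auto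

lemma induced_matchings_empty: "induced_matchings {} E = {{}}"
  unfolding induced_matchings_def by auto

lemma induced_matchings_mono: "P \<subseteq> W \<Longrightarrow> induced_matchings P E \<subseteq> induced_matchings W E"
  unfolding induced_matchings_def by auto

lemma induced_matchings_remove_isolated:
  assumes "nbhd W E x = {}"
  shows "induced_matchings (W - {x}) E = induced_matchings W E"
proof
  show "induced_matchings W E \<subseteq> induced_matchings (W - {x}) E"
  proof
    fix D assume D: "D \<in> induced_matchings W E"
    then have "{u \<in> D. E x u} = {}" using assms unfolding induced_matchings_def nbhd_def by auto
    moreover have "card {u \<in> D. E x u} = 1" if "x \<in> D"
      using D that unfolding induced_matchings_def by auto
    ultimately have "x \<notin> D" by (metis card.empty zero_neq_one)
    then show "D \<in> induced_matchings (W - {x}) E" using D unfolding induced_matchings_def by auto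
  qed
qed (rule induced_matchings_mono, blast)

lemma induced_matching_partner:
  assumes "symp E" and D: "D \<in> induced_matchings W E" and "x \<in> D"
  obtains u where "u \<in> nbhd W E x" "u \<in> D"
    "D - {x, u} \<in> induced_matchings (W - (nbhd W E x \<union> nbhd W E u)) E"
proof -
  have DW: "D \<subseteq> W" and one: "\<And>v. v \<in> D \<Longrightarrow> card {w \<in> D. E v w} = 1"
    using D unfolding induced_matchings_def by auto
  obtain u where u: "{w \<in> D. E x w} = {u}" using one[OF \<open>x \<in> D\<close>] by (rule card_1_singletonE)
  then have "u \<in> D" "E x u" by auto
  then have "x \<in> {w \<in> D. E u w}" using \<open>x \<in> D\<close> \<open>symp E\<close> by (simp add: sympD)
  moreover obtain z where "{w \<in> D. E u w} = {z}" using one[OF \<open>u \<in> D\<close>] by (rule card_1_singletonE)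
  ultimately have ux: "{w \<in> D. E u w} = {x}" by simp
  let ?D' = "D - {x, u}"
  have far: "\<not> E x y" "\<not> E u y" "\<not> E y x" "\<not> E y u" if "y \<in> ?D'" for y
    using that u ux \<open>symp E\<close> by (blast dest: sympD)+
  have "?D' \<subseteq> W - (nbhd W E x \<union> nbhd W E u)" using DW far(1,2) by (auto simp: nbhd_def)
  moreover have "{w \<in> ?D'. E y w} = {w \<in> D. E y w}" if "y \<in> ?D'" for y
    using far(3,4)[OF that] by blast
  ultimately have "?D' \<in> induced_matchings (W - (nbhd W E x \<union> nbhd W E u)) E"
    using one unfolding induced_matchings_def by simp
  moreover have "u \<in> nbhd W E x" using \<open>u \<in> D\<close> \<open>E x u\<close> DW by (auto simp: nbhd_def)
  ultimately show thesis using that \<open>u \<in> D\<close> by blast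
qed

lemma card_induced_matchings_branch:
  assumes "symp E" and "finite W"
  shows "card (induced_matchings W E) \<le> card (induced_matchings (W - {x}) E)
    + (\<Sum>u\<in>nbhd W E x. card (induced_matchings (W - (nbhd W E x \<union> nbhd W E u)) E))"
proof -
  let ?M = "\<lambda>u. induced_matchings (W - (nbhd W E x \<union> nbhd W E u)) E"
  let ?F = "\<lambda>u. (\<lambda>D. insert x (insert u D)) ` ?M u"
  have "induced_matchings W E \<subseteq> induced_matchings (W - {x}) E \<union> (\<Union>u\<in>nbhd W E x. ?F u)"
  proof
    fix D assume D: "D \<in> induced_matchings W E"
    show "D \<in> induced_matchings (W - {x}) E \<union> (\<Union>u\<in>nbhd W E x. ?F u)"
    proof (cases "x \<in> D")
      case False
      then show ?thesis using D unfolding induced_matchings_def by auto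
    next
      case True
      then obtain u where "u \<in> nbhd W E x" "u \<in> D" "D - {x, u} \<in> ?M u"
        using induced_matching_partner[OF \<open>symp E\<close> D] by blast
      moreover have "D = insert x (insert u (D - {x, u}))" using True \<open>u \<in> D\<close> by auto
      ultimately show ?thesis by blast
    qed
  qed
  moreover have "finite (nbhd W E x)" using \<open>finite W\<close> by (simp add: nbhd_def)
  moreover have "finite (?M u)" for u using \<open>finite W\<close> by (simp add: finite_induced_matchings)
  ultimately have "card (induced_matchings W E)
      \<le> card (induced_matchings (W - {x}) E \<union> (\<Union>u\<in>nbhd W E x. ?F u))"
    using \<open>finite W\<close> by (intro card_mono) (simp_all add: finite_induced_matchings)
  also have "\<dots> \<le> card (induced_matchings (W - {x}) E) + card (\<Union>u\<in>nbhd W E x. ?F u)"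
    by (rule card_Un_le)
  also have "\<dots> \<le> card (induced_matchings (W - {x}) E) + (\<Sum>u\<in>nbhd W E x. card (?F u))"
    using card_UN_le[OF \<open>finite (nbhd W E x)\<close>] by (rule add_left_mono)
  also have "\<dots> \<le> card (induced_matchings (W - {x}) E) + (\<Sum>u\<in>nbhd W E x. card (?M u))"
    by (intro add_left_mono sum_mono card_image_le \<open>finite (?M _)\<close>)
  finally show ?thesis .
qed

lemma card_induced_matchings_pendant:
  assumes "symp E" "finite W" "nbhd W E x = {u}"
  shows "card (induced_matchings W E)
    \<le> card (induced_matchings (W - {x}) E) + card (induced_matchings (W - insert u (nbhd W E u)) E)"
  using card_induced_matchings_branch[OF assms(1,2), of x] assms(3) by simp

lemma card_induced_matchings_isolated_edge:
  assumes "symp E" "finite W" "nbhd W E x = {u}" "nbhd W E u = {x}"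
  shows "card (induced_matchings W E) \<le> 2 * card (induced_matchings (W - {x, u}) E)"
proof -
  have "nbhd (W - {x}) E u = {}" using assms(4) by (simp add: nbhd_Diff_singleton)
  then have "induced_matchings (W - {x}) E = induced_matchings (W - {x} - {u}) E"
    by (rule induced_matchings_remove_isolated[symmetric])
  also have "W - {x} - {u} = W - {x, u}" by blast
  finally have "induced_matchings (W - {x}) E = induced_matchings (W - {x, u}) E" .
  moreover have "W - insert u (nbhd W E u) = W - {x, u}" using assms(4) by auto
  ultimately show ?thesis using card_induced_matchings_pendant[OF assms(1-3)] by simp
qed

lemma card_induced_matchings_degree_two:
  assumes "symp E" "finite W" "nbhd W E v = {a, b}" "a \<noteq> b"
  shows "card (induced_matchings W E) \<le> card (induced_matchings (W - {v}) E)
    + card (induced_matchings (W - ({a, b} \<union> nbhd W E a)) E)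
    + card (induced_matchings (W - ({a, b} \<union> nbhd W E b)) E)"
  using card_induced_matchings_branch[OF assms(1,2), of v] assms(3,4) by simp

lemma induced_matchings_eq_filter:
  "induced_matchings V E = Set.filter (\<lambda>D. \<forall>v\<in>D. card {u \<in> D. E v u} = 1) (Pow V)"
  unfolding induced_matchings_def by auto

lemma card_induced_matchings_triangle:
  "card (induced_matchings {0, 1, 2 :: nat} (\<lambda>u v. u \<in> {0, 1, 2} \<and> v \<in> {0, 1, 2} \<and> u \<noteq> v)) = 4"
  unfolding induced_matchings_eq_filter by code_simp

section \<open>The growth rate\<close>

definition rate :: real where
  "rate = 4 powr (1 / 3)"

lemma rate_pos: "0 < rate"
  unfolding rate_def by simp

lemma rate_pow: "rate ^ n = 4 powr (real n / 3)"
  unfolding rate_def by (simp add: powr_realpow[symmetric] powr_powr)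

lemma inverse_rate_cube: "inverse rate ^ 3 = 1 / 4"
  using rate_pow[of 3] by (simp add: power_inverse)

lemma inverse_rate_le: "inverse rate \<le> 16 / 25"
proof (rule ccontr)
  assume "\<not> ?thesis"
  then have "(16 / 25) ^ 3 < inverse rate ^ 3" by (intro power_strict_mono) auto
  then show False unfolding inverse_rate_cube by (simp add: power3_eq_cube)
qed

lemma inverse_rate_sq_le: "inverse rate ^ 2 \<le> 256 / 625"
proof -
  have "inverse rate ^ 2 \<le> (16 / 25) ^ 2"
    using inverse_rate_le rate_pos by (intro power_mono) auto
  then show ?thesis by (simp add: power2_eq_square)
qed

lemma inverse_rate_pow4: "inverse rate ^ 4 = inverse rate / 4"
  using inverse_rate_cube by (simp add: power_Suc2[of _ 3, simplified])

lemma branching_weights: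
  shows "inverse rate ^ 1 \<le> 1"
    and "inverse rate ^ 2 + inverse rate ^ 2 \<le> 1"
    and "inverse rate ^ 1 + inverse rate ^ 3 \<le> 1"
    and "inverse rate ^ 3 + inverse rate ^ 3 + inverse rate ^ 3 + inverse rate ^ 3 \<le> 1"
    and "inverse rate ^ 2 + inverse rate ^ 3 + inverse rate ^ 4 + inverse rate ^ 4 \<le> 1"
    and "inverse rate ^ 1 + inverse rate ^ 4 + inverse rate ^ 4 \<le> 1"
  by (insert inverse_rate_le inverse_rate_sq_le inverse_rate_cube inverse_rate_pow4; simp; linarith)+

section \<open>The branching bound\<close>

text \<open>Each case below removes k vertices along every branch and checks that the weights
  (4^(-1/3))^k of the branches sum to at most one.\<close>
context
  fixes E :: "'a \<Rightarrow> 'a \<Rightarrow> bool" and W :: "'a set"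
  assumes sym: "symp E" and irrefl: "irreflp E" and finite: "finite W"
    and smaller: "\<And>P. P \<subset> W \<Longrightarrow> real (card (induced_matchings P E)) \<le> rate ^ card P"
begin

lemma card_induced_matchings_le_removal:
  assumes K: "K \<subseteq> W" "card K = k" "k \<noteq> 0" and P: "P \<subseteq> W - K"
  shows "real (card (induced_matchings P E)) \<le> rate ^ card W * inverse rate ^ k"
proof -
  have "finite K" using K(1) finite by (rule finite_subset)
  have "card (induced_matchings P E) \<le> card (induced_matchings (W - K) E)"
    using P finite by (intro card_mono finite_induced_matchings induced_matchings_mono) auto
  moreover have "K \<noteq> {}" using K(2,3) by auto
  then have "W - K \<subset> W" using K(1) by blast
  ultimately have "real (card (induced_matchings P E)) \<le> rate ^ card (W - K)"
    using smaller by (meson of_nat_le_iff order_trans)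
  also have "card (W - K) = card W - k" using card_Diff_subset[OF \<open>finite K\<close> K(1)] K(2) by simp
  also have "rate ^ (card W - k) = rate ^ card W * inverse rate ^ k"
    using card_mono[OF finite K(1)] K(2) rate_pos by (simp add: power_diff power_inverse field_simps)
  finally show ?thesis .
qed

lemma card_induced_matchings_le_if_isolated:
  assumes "x \<in> W" "nbhd W E x = {}"
  shows "real (card (induced_matchings W E)) \<le> rate ^ card W"
proof -
  have "real (card (induced_matchings W E)) = real (card (induced_matchings (W - {x}) E))"
    using induced_matchings_remove_isolated[OF assms(2)] by simp
  also have "\<dots> \<le> rate ^ card W * inverse rate ^ 1"
    by (rule card_induced_matchings_le_removal[of "{x}"]) (use assms(1) in auto)
  also have "\<dots> \<le> rate ^ card W"
    using branching_weights(1) rate_pos by (intro mult_left_le) auto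
  finally show ?thesis .
qed

lemma card_induced_matchings_le_if_pendant:
  assumes x: "x \<in> W" "nbhd W E x = {u}"
  shows "real (card (induced_matchings W E)) \<le> rate ^ card W"
proof -
  let ?N = "rate ^ card W" and ?q = "inverse rate"
  have "u \<in> W" "E x u" "x \<noteq> u" using x(2) irrefl by (auto simp: nbhd_def irreflp_def)
  show ?thesis
  proof (cases "nbhd W E u = {x}")
    case True
    have "card (induced_matchings W E) \<le> 2 * card (induced_matchings (W - {x, u}) E)"
      by (rule card_induced_matchings_isolated_edge[OF sym finite x(2) True])
    moreover have "real (card (induced_matchings (W - {x, u}) E)) \<le> ?N * ?q ^ 2"
      by (rule card_induced_matchings_le_removal[of "{x, u}"]) (use x(1) \<open>u \<in> W\<close> \<open>x \<noteq> u\<close> in auto)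
    ultimately have "real (card (induced_matchings W E)) \<le> ?N * ?q ^ 2 + ?N * ?q ^ 2" by linarith
    also have "\<dots> \<le> ?N"
      unfolding distrib_left[symmetric] using branching_weights(2) rate_pos by (intro mult_left_le) auto
    finally show ?thesis .
  next
    case False
    have "x \<in> nbhd W E u" using x(1) \<open>E x u\<close> sym by (simp add: nbhd_def sympD)
    with False obtain w where w: "w \<in> nbhd W E u" "w \<noteq> x" by blast
    then have "w \<in> W" "w \<noteq> u" using irrefl by (auto simp: nbhd_def irreflp_def)
    have "card (induced_matchings W E)
        \<le> card (induced_matchings (W - {x}) E) + card (induced_matchings (W - insert u (nbhd W E u)) E)"
      by (rule card_induced_matchings_pendant[OF sym finite x(2)])
    moreover have "real (card (induced_matchings (W - {x}) E)) \<le> ?N * ?q ^ 1"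
      by (rule card_induced_matchings_le_removal[of "{x}"]) (use x(1) in auto)
    moreover have "real (card (induced_matchings (W - insert u (nbhd W E u)) E)) \<le> ?N * ?q ^ 3"
      by (rule card_induced_matchings_le_removal[of "{x, u, w}"])
        (use x(1) \<open>u \<in> W\<close> \<open>w \<in> W\<close> \<open>x \<in> nbhd W E u\<close> w \<open>x \<noteq> u\<close> \<open>w \<noteq> u\<close> in auto)
    ultimately have "real (card (induced_matchings W E)) \<le> ?N * ?q ^ 1 + ?N * ?q ^ 3" by linarith
    also have "\<dots> \<le> ?N"
      unfolding distrib_left[symmetric] using branching_weights(3) rate_pos by (intro mult_left_le) auto
    finally show ?thesis .
  qed
qed

lemma card_induced_matchings_le_if_triangle:
  assumes v: "v \<in> W" "nbhd W E v = {a, b}" "a \<noteq> b" and a: "nbhd W E a = {v, b}"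
  shows "real (card (induced_matchings W E)) \<le> rate ^ card W"
proof -
  let ?N = "rate ^ card W" and ?q = "inverse rate"
  let ?Ra = "W - ({a, b} \<union> nbhd W E a)" and ?Rb = "W - ({a, b} \<union> nbhd W E b)"
  have "a \<in> W" "b \<in> W" "v \<noteq> a" "v \<noteq> b" "v \<in> nbhd W E b"
    using v irrefl sym by (auto simp: nbhd_def irreflp_def dest: sympD)
  note distinct = v(3) \<open>v \<noteq> a\<close> \<open>v \<noteq> b\<close>
  have Ra: "real (card (induced_matchings ?Ra E)) \<le> ?N * ?q ^ 3"
    by (rule card_induced_matchings_le_removal[of "{v, a, b}"])
      (use v(1) a \<open>a \<in> W\<close> \<open>b \<in> W\<close> distinct in auto)
  have pendant: "nbhd (W - {v}) E a = {b}" using a \<open>v \<noteq> b\<close> by (auto simp: nbhd_Diff_singleton)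
  have "finite (W - {v})" using finite by simp
  note branch_v = card_induced_matchings_degree_two[OF sym finite v(2,3)]
  show ?thesis
  proof (cases "nbhd W E b = {v, a}")
    case True
    then have "nbhd (W - {v}) E b = {a}" using \<open>v \<noteq> a\<close> by (auto simp: nbhd_Diff_singleton)
    with \<open>finite (W - {v})\<close> have
      "card (induced_matchings (W - {v}) E) \<le> 2 * card (induced_matchings (W - {v} - {a, b}) E)"
      by (intro card_induced_matchings_isolated_edge[OF sym _ pendant])
    moreover have "real (card (induced_matchings (W - {v} - {a, b}) E)) \<le> ?N * ?q ^ 3"
      by (rule card_induced_matchings_le_removal[of "{v, a, b}"])
        (use v(1) \<open>a \<in> W\<close> \<open>b \<in> W\<close> distinct in auto)
    moreover have "real (card (induced_matchings ?Rb E)) \<le> ?N * ?q ^ 3"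
      by (rule card_induced_matchings_le_removal[of "{v, a, b}"])
        (use True v(1) \<open>a \<in> W\<close> \<open>b \<in> W\<close> distinct in auto)
    ultimately have "real (card (induced_matchings W E))
        \<le> ?N * ?q ^ 3 + ?N * ?q ^ 3 + ?N * ?q ^ 3 + ?N * ?q ^ 3"
      using branch_v Ra by linarith
    also have "\<dots> \<le> ?N"
      unfolding distrib_left[symmetric] using branching_weights(4) rate_pos by (intro mult_left_le) auto
    finally show ?thesis .
  next
    case False
    have "a \<in> nbhd W E b" using a \<open>b \<in> W\<close> \<open>a \<in> W\<close> sym by (auto simp: nbhd_def dest: sympD)
    with False \<open>v \<in> nbhd W E b\<close> obtain w where w: "w \<in> nbhd W E b" "w \<noteq> v" "w \<noteq> a" by blast
    then have "w \<in> W" "w \<noteq> b" using irrefl by (auto simp: nbhd_def irreflp_def)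
    let ?Rab = "W - {v} - insert b (nbhd (W - {v}) E b)"
    have "card (induced_matchings (W - {v}) E)
        \<le> card (induced_matchings (W - {v} - {a}) E) + card (induced_matchings ?Rab E)"
      by (rule card_induced_matchings_pendant[OF sym \<open>finite (W - {v})\<close> pendant])
    moreover have "real (card (induced_matchings (W - {v} - {a}) E)) \<le> ?N * ?q ^ 2"
      by (rule card_induced_matchings_le_removal[of "{v, a}"]) (use v(1) \<open>a \<in> W\<close> distinct in auto)
    moreover have "real (card (induced_matchings ?Rab E)) \<le> ?N * ?q ^ 4"
      by (rule card_induced_matchings_le_removal[of "{v, a, b, w}"])
        (use v(1) w \<open>a \<in> nbhd W E b\<close> \<open>a \<in> W\<close> \<open>b \<in> W\<close> \<open>w \<in> W\<close> \<open>w \<noteq> b\<close> distinct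
          in \<open>auto simp: nbhd_Diff_singleton\<close>)
    moreover have "real (card (induced_matchings ?Rb E)) \<le> ?N * ?q ^ 4"
      by (rule card_induced_matchings_le_removal[of "{v, a, b, w}"])
        (use v(1) w \<open>a \<in> W\<close> \<open>b \<in> W\<close> \<open>w \<in> W\<close> \<open>w \<noteq> b\<close> \<open>v \<in> nbhd W E b\<close> distinct
          in auto)
    ultimately have "real (card (induced_matchings W E))
        \<le> ?N * ?q ^ 2 + ?N * ?q ^ 3 + ?N * ?q ^ 4 + ?N * ?q ^ 4"
      using branch_v Ra by linarith
    also have "\<dots> \<le> ?N"
      unfolding distrib_left[symmetric] using branching_weights(5) rate_pos by (intro mult_left_le) auto
    finally show ?thesis .
  qed
qed

lemma neighbour_outside_triangle:
  assumes "v \<in> W" "nbhd W E v = {a, b}" "nbhd W E a \<noteq> {v, b}" "\<And>u. nbhd W E a \<noteq> {u}"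
  obtains w where "w \<in> nbhd W E a" "w \<notin> {v, a, b}"
proof -
  have "v \<in> nbhd W E a" using assms(1,2) sym by (auto simp: nbhd_def dest: sympD)
  have "a \<notin> nbhd W E a" using irrefl by (simp add: nbhd_def irreflp_def)
  have "\<not> nbhd W E a \<subseteq> {v, b}"
  proof
    assume "nbhd W E a \<subseteq> {v, b}"
    then have "nbhd W E a = {v} \<or> nbhd W E a = {v, b}"
      using \<open>v \<in> nbhd W E a\<close> by (cases "b \<in> nbhd W E a") auto
    then show False using assms(3) assms(4)[of v] by auto
  qed
  then show thesis using that \<open>a \<notin> nbhd W E a\<close> by blast
qed

lemma card_induced_matchings_le_if_degree_two:
  assumes v: "v \<in> W" "nbhd W E v = {a, b}" "a \<noteq> b"
    and no_pendant: "\<And>y u. y \<in> W \<Longrightarrow> nbhd W E y \<noteq> {u}"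
  shows "real (card (induced_matchings W E)) \<le> rate ^ card W"
proof (cases "nbhd W E a = {v, b} \<or> nbhd W E b = {v, a}")
  case True
  then show ?thesis
  proof
    assume "nbhd W E a = {v, b}"
    then show ?thesis by (rule card_induced_matchings_le_if_triangle[OF v])
  next
    assume "nbhd W E b = {v, a}"
    moreover have "nbhd W E v = {b, a}" using v(2) by (simp add: insert_commute)
    ultimately show ?thesis using card_induced_matchings_le_if_triangle[OF v(1)] v(3) by simp
  qed
next
  case False
  let ?N = "rate ^ card W" and ?q = "inverse rate"
  have "a \<in> W" "b \<in> W" "v \<noteq> a" "v \<noteq> b"
    using v irrefl by (auto simp: nbhd_def irreflp_def)
  obtain wa where wa: "wa \<in> nbhd W E a" "wa \<notin> {v, a, b}"
    using neighbour_outside_triangle[OF v(1,2)] False no_pendant[OF \<open>a \<in> W\<close>] by blast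
  obtain wb where wb: "wb \<in> nbhd W E b" "wb \<notin> {v, a, b}"
    using neighbour_outside_triangle[of v b a] v(1,2) False no_pendant[OF \<open>b \<in> W\<close>]
    by (metis insert_commute)
  have near: "v \<in> nbhd W E a" "v \<in> nbhd W E b" "wa \<in> W" "wb \<in> W"
    using v(1,2) wa(1) wb(1) sym by (auto simp: nbhd_def dest: sympD)
  have "real (card (induced_matchings (W - {v}) E)) \<le> ?N * ?q ^ 1"
    by (rule card_induced_matchings_le_removal[of "{v}"]) (use v(1) in auto)
  moreover have "real (card (induced_matchings (W - ({a, b} \<union> nbhd W E a)) E)) \<le> ?N * ?q ^ 4"
    by (rule card_induced_matchings_le_removal[of "{v, a, b, wa}"])
      (use v(1,3) wa near \<open>a \<in> W\<close> \<open>b \<in> W\<close> \<open>v \<noteq> a\<close> \<open>v \<noteq> b\<close> in auto)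
  moreover have "real (card (induced_matchings (W - ({a, b} \<union> nbhd W E b)) E)) \<le> ?N * ?q ^ 4"
    by (rule card_induced_matchings_le_removal[of "{v, a, b, wb}"])
      (use v(1,3) wb near \<open>a \<in> W\<close> \<open>b \<in> W\<close> \<open>v \<noteq> a\<close> \<open>v \<noteq> b\<close> in auto)
  ultimately have "real (card (induced_matchings W E)) \<le> ?N * ?q ^ 1 + ?N * ?q ^ 4 + ?N * ?q ^ 4"
    using card_induced_matchings_degree_two[OF sym finite v(2,3)] by linarith
  also have "\<dots> \<le> ?N"
    unfolding distrib_left[symmetric] using branching_weights(6) rate_pos by (intro mult_left_le) auto
  finally show ?thesis .
qed

lemma card_induced_matchings_le_if_low_degree:
  assumes v: "v \<in> W" "card (nbhd W E v) \<le> 2"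
  shows "real (card (induced_matchings W E)) \<le> rate ^ card W"
proof (cases "\<exists>x\<in>W. nbhd W E x = {}")
  case True
  then obtain x where "x \<in> W" "nbhd W E x = {}" by auto
  then show ?thesis by (rule card_induced_matchings_le_if_isolated)
next
  case no_isolated: False
  show ?thesis
  proof (cases "\<exists>x\<in>W. \<exists>u. nbhd W E x = {u}")
    case True
    then obtain x u where "x \<in> W" "nbhd W E x = {u}" by auto
    then show ?thesis by (rule card_induced_matchings_le_if_pendant)
  next
    case False
    have "finite (nbhd W E v)" using finite by (simp add: nbhd_def)
    then have "card (nbhd W E v) \<noteq> 0" "card (nbhd W E v) \<noteq> 1"
      using no_isolated False v(1) by (auto simp: card_1_singleton_iff)
    then have "card (nbhd W E v) = 2" using v(2) by linarith
    then obtain a b where "nbhd W E v = {a, b}" "a \<noteq> b" by (metis card_2_iff)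
    then show ?thesis using v(1) False by (intro card_induced_matchings_le_if_degree_two) auto
  qed
qed

end

lemma card_induced_matchings_le_rate_pow:
  assumes "symp E" "irreflp E" "finite V" "degenerate V E 2"
  shows "real (card (induced_matchings V E)) \<le> rate ^ card V"
  using assms(3,4)
proof (induction V rule: finite_psubset_induct)
  case (psubset W)
  show ?case
  proof (cases "W = {}")
    case True
    then show ?thesis by (simp add: induced_matchings_empty)
  next
    case False
    then obtain v where "v \<in> W" "card (nbhd W E v) \<le> 2"
      using psubset.prems unfolding degenerate_def by blast
    moreover have "real (card (induced_matchings P E)) \<le> rate ^ card P" if "P \<subset> W" for P
      using psubset.IH[OF that] degenerate_subset[OF psubset.prems] that by blast
    ultimately show ?thesis
      using card_induced_matchings_le_if_low_degree[OF assms(1,2) psubset.hyps] by blast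
  qed
qed

theorem mainTheorem14:
  shows "(\<forall>(V :: 'a set) E. simple_graph V E \<and> pathwidth_le V E 2 \<longrightarrow>
            real (card (induced_matchings V E)) \<le> 4 powr (real (card V) / 3))
       \<and> (let V3 = {0, 1, 2 :: nat}; E3 = (\<lambda>u v. u \<in> V3 \<and> v \<in> V3 \<and> u \<noteq> v) in
            simple_graph V3 E3 \<and> pathwidth_le V3 E3 2 \<and>
            real (card (induced_matchings V3 E3)) = 4 powr (real (card V3) / 3))"
proof (intro conjI allI impI)
  fix V :: "'a set" and E
  assume G: "simple_graph V E \<and> pathwidth_le V E 2"
  then have "finite V" "symp E" "irreflp E"
    unfolding simple_graph_def symp_def irreflp_def by blast+
  with G have "degenerate V E 2" by (blast intro: pathwidth_le_imp_degenerate)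
  then show "real (card (induced_matchings V E)) \<le> 4 powr (real (card V) / 3)"
    using card_induced_matchings_le_rate_pow \<open>finite V\<close> \<open>symp E\<close> \<open>irreflp E\<close>
    by (simp add: rate_pow)
next
  show "let V3 = {0, 1, 2 :: nat}; E3 = (\<lambda>u v. u \<in> V3 \<and> v \<in> V3 \<and> u \<noteq> v) in
      simple_graph V3 E3 \<and> pathwidth_le V3 E3 2 \<and>
      real (card (induced_matchings V3 E3)) = 4 powr (real (card V3) / 3)"
    unfolding Let_def simple_graph_def pathwidth_le_def path_decomposition_def
      card_induced_matchings_triangle
    by (intro conjI exI[of _ "[{0, 1, 2}]"]) auto
qed

end
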